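(* Let $P\subset\mathbb R_+^n$ be a nonempty $n$-dimensional polyhedron with $P+\mathbb R_+^n\subset P$, $\Sigma$ a simplicial subdivision of the fan $\Sigma_0$ associated with $P$, $\sigma\in\Sigma^{(n)}$ with skeleton $a^1(\sigma),\dots,a^n(\sigma)$, $I\subset\{1,\dots,n\}$, and $\gamma=\gamma(I,\sigma)$ (assumed nonempty). Then the following are equivalent: (i) $\gamma$ is compact; (ii) $\sum_{j\in I}a^j_k(\sigma)>0$ for every $k=1,\dots,n$; (iii) $V(\gamma)=\emptyset$; (iv) $\pi(\sigma)(T_I(\mathbb R^n))=\{0\}$; (v) $\pi(\sigma)(T_I^*(\mathbb R^n))=\{0\}$.
   Context: $H(a,l)=\{x:\langle a,x\rangle=l\}$, $H^+(a,l)=\{x:\langle a,x\rangle\ge l\}$; polyhedron: finite intersection of $H^+(a,l)$ with $(a,l)\in\mathbb Z^n\times\mathbb Z$; faces are $P\cap H(a,l)$ with $P\subset H^+(a,l)$. $l(a)=\min\{\langle a,\alpha\rangle:\alpha\in P\}$. For each face $\gamma$, $\gamma^*=\{a\in\mathbb R_+^n:H(a,l(a))\cap P=\gamma\}$; closures of the $\gamma^*$ form the fan $\Sigma_0$. A simplicial subdivision $\Sigma$: fan with support $\mathbb R_+^n$, each cone inside a cone of $\Sigma_0$, each cone's skeleton (primitive integer edge vectors) completable to a basis of $\mathbb Z^n$; $\Sigma^{(n)}$ its $n$-dimensional cones. $\gamma(I,\sigma)=\bigcap_{j\in I}H(a^j(\sigma),l(a^j(\sigma)))\cap P$, with $\gamma(\emptyset,\sigma)=P$.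 $V(\gamma)=\{k:\gamma+\mathbb R_+e_k\subset\gamma\}$ ($e_k$ standard basis vector). $\pi(\sigma)(y)=x$ with $x_k=\prod_jy_j^{a^j_k(\sigma)}$. $T_I(\mathbb R^n)=\{y:y_j=0\text{ for }j\in I\}$, $T_I^*(\mathbb R^n)=\{y:y_j=0\iff j\in I\}$. *)

theory Defs
  imports "HOL-Analysis.Analysis"
begin

definition rplus :: "(real^'n) set" where
  "rplus = {x. \<forall>i. 0 \<le> x$i}"

definition int_vec :: "real^'n \<Rightarrow> bool" where
  "int_vec a \<longleftrightarrow> (\<forall>i. a$i \<in> \<int>)"

definition hyp :: "real^'n \<Rightarrow> real \<Rightarrow> (real^'n) set" where
  "hyp a l = {x. inner a x = l}"

definition hsp :: "real^'n \<Rightarrow> real \<Rightarrow> (real^'n) set" where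
  "hsp a l = {x. inner a x \<ge> l}"

definition polyhedron :: "(real^'n) set \<Rightarrow> bool" where
  "polyhedron P \<longleftrightarrow> (\<exists>S. finite S \<and> (\<forall>(a,l)\<in>S. int_vec a \<and> l \<in> \<int>) \<and>
      P = (\<Inter>(a,l)\<in>S. hsp a l))"

definition face_of_poly :: "(real^'n) set \<Rightarrow> (real^'n) set \<Rightarrow> bool" where
  "face_of_poly P \<gamma> \<longleftrightarrow> (\<exists>a l. P \<subseteq> hsp a l \<and> \<gamma> = P \<inter> hyp a l)"

definition lmin :: "(real^'n) set \<Rightarrow> real^'n \<Rightarrow> real" where
  "lmin P a = Inf ((\<lambda>\<alpha>. inner a \<alpha>) ` P)"

definition dual_cone :: "(real^'n) set \<Rightarrow> (real^'n) set \<Rightarrow> (real^'n) set" where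
  "dual_cone P \<gamma> = {a \<in> rplus. hyp a (lmin P a) \<inter> P = \<gamma>}"

definition fan0 :: "(real^'n) set \<Rightarrow> (real^'n) set set" where
  "fan0 P = {closure (dual_cone P \<gamma>) | \<gamma>. face_of_poly P \<gamma>}"

definition cone_gen :: "(real^'n) set \<Rightarrow> (real^'n) set" where
  "cone_gen V = {\<Sum>v\<in>V. c v *\<^sub>R v | c. \<forall>v\<in>V. 0 \<le> c v}"

definition zbasis :: "(real^'n) set \<Rightarrow> bool" where
  "zbasis B \<longleftrightarrow> finite B \<and> (\<forall>b\<in>B. int_vec b) \<and> independent B \<and>
     (\<forall>x. int_vec x \<longrightarrow> (\<exists>c. (\<forall>b\<in>B. c b \<in> \<int>) \<and> x = (\<Sum>b\<in>B. c b *\<^sub>R b)))"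

definition primitive :: "real^'n \<Rightarrow> bool" where
  "primitive v \<longleftrightarrow> int_vec v \<and> v \<noteq> 0 \<and>
     (\<forall>(m::int) w. int_vec w \<and> v = of_int m *\<^sub>R w \<longrightarrow> \<bar>m\<bar> = 1)"

definition simplicial_subdivision :: "(real^'n) set \<Rightarrow> (real^'n) set set \<Rightarrow> bool" where
  "simplicial_subdivision P \<Sigma> \<longleftrightarrow>
     finite \<Sigma> \<and>
     (\<forall>\<sigma>\<in>\<Sigma>. \<exists>V. finite V \<and> \<sigma> = cone_gen V \<and> (\<forall>v\<in>V. primitive v) \<and>
                   (\<exists>B. V \<subseteq> B \<and> zbasis B)) \<and>
     (\<forall>\<sigma>\<in>\<Sigma>. \<forall>\<tau>. face_of_poly \<sigma> \<tau> \<and> \<tau> \<noteq> {} \<longrightarrow> \<tau> \<in> \<Sigma>) \<and>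
     (\<forall>\<sigma>\<in>\<Sigma>. \<forall>\<tau>\<in>\<Sigma>. face_of_poly \<sigma> (\<sigma> \<inter> \<tau>) \<and> face_of_poly \<tau> (\<sigma> \<inter> \<tau>)) \<and>
     \<Union>\<Sigma> = rplus \<and>
     (\<forall>\<sigma>\<in>\<Sigma>. \<exists>C\<in>fan0 P. \<sigma> \<subseteq> C)"

definition top_cones :: "(real^'n) set set \<Rightarrow> (real^'n) set set" where
  "top_cones \<Sigma> = {\<sigma>\<in>\<Sigma>. aff_dim \<sigma> = int CARD('n)}"

definition gamma_face :: "(real^'n) set \<Rightarrow> ('n \<Rightarrow> real^'n) \<Rightarrow> 'n set \<Rightarrow> (real^'n) set" where
  "gamma_face P a I = (\<Inter>j\<in>I. hyp (a j) (lmin P (a j))) \<inter> P"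

definition Vset :: "(real^'n) set \<Rightarrow> 'n set" where
  "Vset \<gamma> = {k. \<forall>x\<in>\<gamma>. \<forall>t::real. 0 \<le> t \<longrightarrow> x + t *\<^sub>R axis k 1 \<in> \<gamma>}"

text \<open>The monomial map \<pi>(\<sigma>); the exponents a^j_k are nonnegative integers.\<close>
definition pi_map :: "('n \<Rightarrow> real^'n) \<Rightarrow> real^'n \<Rightarrow> real^'n" where
  "pi_map a y = (\<chi> k. \<Prod>j\<in>UNIV. (y$j) ^ nat \<lfloor>a j $ k\<rfloor>)"

definition T_I :: "'n set \<Rightarrow> (real^'n) set" where
  "T_I I = {y. \<forall>j\<in>I. y$j = 0}"

definition T_I_star :: "'n set \<Rightarrow> (real^'n) set" where
  "T_I_star I = {y. \<forall>j. y$j = 0 \<longleftrightarrow> j \<in> I}"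

end

theory Submission
  imports Defs
begin

text \<open>
  Write \<gamma> = \<gamma>(I,\<sigma>) and call a coordinate k "covered" if a^j_k > 0 for
  some j \<in> I.  All five conditions are shown equivalent to the single condition
  "every coordinate is covered":
  \<^item> the skeleton vectors lie in \<sigma> \<subseteq> R_+^n, so their coordinates are nonnegative
    (and integral, being primitive); hence \<Sum>_{j\<in>I} a^j_k > 0 iff k is covered;
  \<^item> since P + R_+^n \<subseteq> P, a direction e_k is a recession direction of \<gamma> exactly
    when no hyperplane \<langle>a^j,x\<rangle> = l(a^j), j \<in> I, involves x_k, i.e. V(\<gamma>) is the set
    of uncovered coordinates;
  \<^item> a nonempty set with a recession direction is unbounded, while if every
    coordinate is covered, summing the equations of \<gamma> bounds every x_k on \<gamma>;
    as \<gamma> is closed, compactness is equivalent to coverage;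
  \<^item> the monomial map kills T_I(R^n) iff every coordinate monomial contains some
    y_j, j \<in> I; testing at the point y_j = [j \<notin> I] \<in> T_I^*(R^n) \<subseteq> T_I(R^n) gives
    both remaining equivalences.
\<close>

lemma polyhedron_closed: "polyhedron P \<Longrightarrow> closed P"
  unfolding polyhedron_def hsp_def
  by (auto intro!: closed_INT simp: closed_halfspace_ge split: prod.splits)

lemma gamma_face_iff:
  "x \<in> gamma_face P a I \<longleftrightarrow> x \<in> P \<and> (\<forall>j\<in>I. inner (a j) x = lmin P (a j))"
  unfolding gamma_face_def hyp_def by auto

lemma gamma_face_closed: "polyhedron P \<Longrightarrow> closed (gamma_face P a I)"
  unfolding gamma_face_def hyp_def
  by (intro closed_Int closed_INT polyhedron_closed ballI closed_hyperplane)

lemma generator_in_cone_gen: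
  assumes "finite V" and "v \<in> V"
  shows "v \<in> cone_gen V"
proof -
  have "v = (\<Sum>w\<in>V. (if w = v then 1 else 0) *\<^sub>R w)"
    using assms by (simp add: if_distrib[of "\<lambda>c. c *\<^sub>R _"] cong: if_cong)
  then show ?thesis unfolding cone_gen_def by force
qed

lemma skeleton_nonneg:
  fixes a :: "'n::finite \<Rightarrow> real^'n"
  assumes "simplicial_subdivision P \<Sigma>" and "cone_gen (range a) \<in> \<Sigma>"
  shows "0 \<le> a j $ k"
proof -
  have "cone_gen (range a) \<subseteq> rplus"
    using assms unfolding simplicial_subdivision_def by auto
  moreover have "a j \<in> cone_gen (range a)"
    by (rule generator_in_cone_gen) auto
  ultimately show ?thesis unfolding rplus_def by auto
qed

lemma sum_nonneg_pos_iff: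
  fixes f :: "'a \<Rightarrow> 'b::ordered_comm_monoid_add"
  assumes "finite A" and "\<And>x. x \<in> A \<Longrightarrow> 0 \<le> f x"
  shows "0 < sum f A \<longleftrightarrow> (\<exists>x\<in>A. 0 < f x)"
proof
  assume pos: "0 < sum f A"
  show "\<exists>x\<in>A. 0 < f x"
  proof (rule ccontr)
    assume "\<not> (\<exists>x\<in>A. 0 < f x)"
    then have "\<forall>x\<in>A. f x = 0" using assms(2) by (auto simp: order_le_less)
    then have "sum f A = 0" by (rule sum.neutral)
    then show False using pos by (metis less_irrefl)
  qed
next
  assume "\<exists>x\<in>A. 0 < f x"
  then obtain x where "x \<in> A" "0 < f x" by blast
  then show "0 < sum f A" using sum_pos2[OF assms(1)] assms(2) by blast
qed

lemma Vset_gamma_face: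
  assumes up: "\<forall>x\<in>P. \<forall>y\<in>rplus. x + y \<in> P" and ne: "gamma_face P a I \<noteq> {}"
  shows "Vset (gamma_face P a I) = {k. \<forall>j\<in>I. a j $ k = 0}"
proof (intro set_eqI iffI)
  fix k assume "k \<in> Vset (gamma_face P a I)"
  moreover obtain x where x: "x \<in> gamma_face P a I" using ne by auto
  ultimately have ray: "\<forall>t\<ge>0. x + t *\<^sub>R axis k 1 \<in> gamma_face P a I" unfolding Vset_def by auto
  have x1: "x + 1 *\<^sub>R axis k 1 \<in> gamma_face P a I" using ray[rule_format, OF zero_le_one] .
  have "a j $ k = 0" if "j \<in> I" for j
  proof -
    have "inner (a j) (x + 1 *\<^sub>R axis k 1) = inner (a j) x"
      using x x1 that by (simp add: gamma_face_iff)
    then show ?thesis by (simp add: inner_add_right inner_axis)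
  qed
  then show "k \<in> {k. \<forall>j\<in>I. a j $ k = 0}" by simp
next
  fix k assume k: "k \<in> {k. \<forall>j\<in>I. a j $ k = 0}"
  show "k \<in> Vset (gamma_face P a I)" unfolding Vset_def
  proof (intro CollectI ballI allI impI)
    fix x and t :: real assume x: "x \<in> gamma_face P a I" and t: "0 \<le> t"
    have "t *\<^sub>R axis k 1 \<in> rplus" using t unfolding rplus_def by (simp add: axis_def)
    then have "x + t *\<^sub>R axis k 1 \<in> P" using up x by (auto simp: gamma_face_iff)
    moreover have "inner (a j) (x + t *\<^sub>R axis k 1) = inner (a j) x" if "j \<in> I" for j
      using k that by (simp add: inner_add_right inner_axis)
    ultimately show "x + t *\<^sub>R axis k 1 \<in> gamma_face P a I" using x by (simp add: gamma_face_iff)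
  qed
qed

lemma Vset_nonempty_unbounded:
  fixes S :: "(real^'n) set"
  assumes "S \<noteq> {}" and "k \<in> Vset S"
  shows "\<not> bounded S"
proof
  assume "bounded S"
  then obtain B where B: "\<forall>z\<in>S. norm z \<le> B" by (auto simp: bounded_iff)
  obtain x where x: "x \<in> S" using assms(1) by auto
  define t where "t = \<bar>B\<bar> + norm x + 1"
  have "t \<ge> 0" unfolding t_def by simp
  then have "x + t *\<^sub>R axis k 1 \<in> S" using assms(2) x unfolding Vset_def by auto
  then have "norm (x + t *\<^sub>R axis k 1) \<le> B" using B by auto
  moreover have "norm (t *\<^sub>R (axis k (1::real) :: real^'n)) = t" using \<open>t \<ge> 0\<close> by simp
  moreover have "norm (t *\<^sub>R (axis k (1::real) :: real^'n)) \<le> norm (x + t *\<^sub>R axis k 1) + norm x"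
    using norm_triangle_ineq4[of "x + t *\<^sub>R axis k 1" x] by simp
  ultimately show False using t_def abs_ge_self[of B] by linarith
qed

text \<open>If P \<subseteq> R_+^n and every coordinate carries a positive total weight
  s_k = \<Sum>_{j\<in>I} a^j_k, then adding the equations of \<gamma> gives \<Sum>_k s_k x_k = \<Sum>_{j\<in>I} l(a^j),
  which bounds each coordinate of a point of \<gamma>.\<close>
lemma gamma_face_bounded:
  assumes "P \<subseteq> rplus" and pos: "\<forall>k. 0 < (\<Sum>j\<in>I. a j $ k)"
  shows "bounded (gamma_face P a I)"
proof -
  define s where "s k = (\<Sum>j\<in>I. a j $ k)" for k
  define L where "L = (\<Sum>j\<in>I. lmin P (a j))"
  have "gamma_face P a I \<subseteq> cbox 0 (\<chi> k. L / s k)"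
  proof
    fix x assume x: "x \<in> gamma_face P a I"
    have xn: "0 \<le> x $ k" for k using x assms(1) unfolding gamma_face_iff rplus_def by auto
    have "L = (\<Sum>j\<in>I. inner (a j) x)" unfolding L_def using x by (simp add: gamma_face_iff)
    also have "\<dots> = (\<Sum>j\<in>I. \<Sum>k\<in>UNIV. a j $ k * x $ k)" by (simp add: inner_vec_def)
    also have "\<dots> = (\<Sum>k\<in>UNIV. s k * x $ k)" unfolding s_def
      by (subst sum.swap) (simp add: sum_distrib_right)
    finally have L_eq: "L = (\<Sum>k\<in>UNIV. s k * x $ k)" .
    have "x $ k \<le> L / s k" for k
    proof -
      have terms_nonneg: "0 \<le> s i * x $ i" for i
        using pos xn unfolding s_def by (simp add: less_imp_le)
      have "s k * x $ k \<le> (\<Sum>k\<in>UNIV. s k * x $ k)"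
        by (rule member_le_sum) (simp_all add: terms_nonneg)
      then show ?thesis using pos L_eq by (simp add: s_def pos_le_divide_eq mult.commute)
    qed
    then show "x \<in> cbox 0 (\<chi> k. L / s k)" using xn by (simp add: mem_box_cart)
  qed
  then show ?thesis using bounded_cbox bounded_subset by blast
qed

lemma pi_map_vanishes_on_T_I:
  assumes int: "\<forall>j k. a j $ k \<in> \<int>" and cover: "\<forall>k. \<exists>j\<in>I. 0 < a j $ k"
    and y: "y \<in> T_I I"
  shows "pi_map a y = 0"
proof -
  have "pi_map a y $ k = 0" for k
  proof -
    obtain j where j: "j \<in> I" "0 < a j $ k" using cover by blast
    obtain m where "a j $ k = of_int m" using int Ints_cases by blast
    then have "nat \<lfloor>a j $ k\<rfloor> > 0" using j(2) by simp
    moreover have "y $ j = 0" using y j(1) unfolding T_I_def by auto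
    ultimately have "(y$j) ^ nat \<lfloor>a j $ k\<rfloor> = 0" by simp
    then show ?thesis unfolding pi_map_def by (auto intro: prod_zero)
  qed
  then show ?thesis by (simp add: vec_eq_iff)
qed

definition indicator_point :: "'n set \<Rightarrow> real^'n" where
  "indicator_point I = (\<chi> j. if j \<in> I then 0 else 1)"

lemma indicator_point_in_T_I_star: "indicator_point I \<in> T_I_star I"
  unfolding indicator_point_def T_I_star_def by auto

lemma T_I_star_subset_T_I: "T_I_star I \<subseteq> T_I I"
  unfolding T_I_def T_I_star_def by auto

lemma pi_map_indicator_point:
  assumes "\<forall>j\<in>I. a j $ k \<le> 0"
  shows "pi_map a (indicator_point I) $ k = 1"
proof -
  have "(indicator_point I $ j) ^ nat \<lfloor>a j $ k\<rfloor> = 1" for j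
    using assms by (cases "j \<in> I") (auto simp: indicator_point_def)
  then show ?thesis unfolding pi_map_def by simp
qed

lemma pi_map_image_zero_iff:
  assumes int: "\<forall>j k. a j $ k \<in> \<int>"
    and "indicator_point I \<in> S" and "S \<subseteq> T_I I"
  shows "pi_map a ` S = {0} \<longleftrightarrow> (\<forall>k. \<exists>j\<in>I. 0 < a j $ k)"
proof
  assume "pi_map a ` S = {0}"
  then have zero: "pi_map a (indicator_point I) = 0" using assms(2) by blast
  show "\<forall>k. \<exists>j\<in>I. 0 < a j $ k"
  proof (rule ccontr)
    assume "\<not> (\<forall>k. \<exists>j\<in>I. 0 < a j $ k)"
    then obtain k where "\<forall>j\<in>I. a j $ k \<le> 0" by (auto simp: not_less)
    then have "pi_map a (indicator_point I) $ k = 1" by (rule pi_map_indicator_point)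
    then show False using zero by simp
  qed
next
  assume "\<forall>k. \<exists>j\<in>I. 0 < a j $ k"
  then have "\<forall>y\<in>S. pi_map a y = 0"
    using pi_map_vanishes_on_T_I[OF int] assms(3) by blast
  then have "pi_map a ` S \<subseteq> {0}" by blast
  moreover have "pi_map a ` S \<noteq> {}" using assms(2) by blast
  ultimately show "pi_map a ` S = {0}" by (simp add: subset_singleton_iff)
qed

theorem proposition8p6:
  fixes P :: "(real^'n) set" and \<Sigma> :: "(real^'n) set set" and \<sigma> :: "(real^'n) set"
    and a :: "'n \<Rightarrow> real^'n" and I :: "'n set"
  assumes "polyhedron P" and "P \<noteq> {}" and "P \<subseteq> rplus"
    and "aff_dim P = int CARD('n)"
    and "\<forall>x\<in>P. \<forall>y\<in>rplus. x + y \<in> P"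
    and "simplicial_subdivision P \<Sigma>"
    and "\<sigma> \<in> top_cones \<Sigma>"
    and "inj a" and "\<forall>j. primitive (a j)" and "\<sigma> = cone_gen (range a)"
    and "gamma_face P a I \<noteq> {}"
  shows "(compact (gamma_face P a I) \<longleftrightarrow> (\<forall>k. (\<Sum>j\<in>I. a j $ k) > 0)) \<and>
         ((\<forall>k. (\<Sum>j\<in>I. a j $ k) > 0) \<longleftrightarrow> Vset (gamma_face P a I) = {}) \<and>
         (Vset (gamma_face P a I) = {} \<longleftrightarrow> pi_map a ` T_I I = {0}) \<and>
         (pi_map a ` T_I I = {0} \<longleftrightarrow> pi_map a ` T_I_star I = {0})"
proof -
  let ?\<gamma> = "gamma_face P a I"
  let ?covered = "\<forall>k. \<exists>j\<in>I. 0 < a j $ k"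
  have int: "\<forall>j k. a j $ k \<in> \<int>"
    using assms(9) unfolding primitive_def int_vec_def by auto
  have nonneg: "0 \<le> a j $ k" for j k
    using skeleton_nonneg[OF assms(6)] assms(7,10) unfolding top_cones_def by auto
  have sum_iff: "(\<forall>k. (\<Sum>j\<in>I. a j $ k) > 0) \<longleftrightarrow> ?covered"
    by (simp add: sum_nonneg_pos_iff nonneg)
  have V_iff: "Vset ?\<gamma> = {} \<longleftrightarrow> ?covered"
  proof -
    have "a j $ k \<noteq> 0 \<longleftrightarrow> 0 < a j $ k" for j k using nonneg[of j k] by auto
    then show ?thesis by (auto simp: Vset_gamma_face[OF assms(5,11)])
  qed
  have compact_iff: "compact ?\<gamma> \<longleftrightarrow> ?covered"
  proof
    assume "compact ?\<gamma>"
    then have "Vset ?\<gamma> = {}"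
      using compact_imp_bounded Vset_nonempty_unbounded[OF assms(11)] by blast
    then show ?covered using V_iff by simp
  next
    assume ?covered
    then have "bounded ?\<gamma>" using gamma_face_bounded[OF assms(3)] sum_iff by simp
    then show "compact ?\<gamma>" using gamma_face_closed[OF assms(1)] by (simp add: compact_eq_bounded_closed)
  qed
  have in_T_I: "indicator_point I \<in> T_I I"
    using T_I_star_subset_T_I indicator_point_in_T_I_star by blast
  have pi_iff: "pi_map a ` T_I I = {0} \<longleftrightarrow> ?covered"
    by (rule pi_map_image_zero_iff[OF int in_T_I order_refl])
  have pi_star_iff: "pi_map a ` T_I_star I = {0} \<longleftrightarrow> ?covered"
    by (rule pi_map_image_zero_iff[OF int indicator_point_in_T_I_star T_I_star_subset_T_I])
  show ?thesis by (simp only: compact_iff sum_iff V_iff pi_iff pi_star_iff)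
qed

end
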